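(* For every $n$ such that $Y_n=k\in\{1,\dots,N-1\}$: (1) if $Y_{n+1}=k+1$ then $\begin{pmatrix}U_{n+1}\\ V_{n+1}\end{pmatrix}=\bar B_k^+\begin{pmatrix}U_n\\ V_n\end{pmatrix}$ with $\bar B_k^+=\begin{pmatrix}1-\frac{N-k}{2N(k+1)} & \frac{N-k}{2N(k+1)}\\ 0 & 1\end{pmatrix}$; (2) if $Y_{n+1}=k-1$ then $\begin{pmatrix}U_{n+1}\\ V_{n+1}\end{pmatrix}=\bar B_k^-\begin{pmatrix}U_n\\ V_n\end{pmatrix}$ with $\bar B_k^-=\begin{pmatrix}1 & 0\\ \frac{k}{2N(N-k+1)} & 1-\frac{k}{2N(N-k+1)}\end{pmatrix}$; (3) if $Y_{n+1}=k$ then $\begin{pmatrix}U_{n+1}\\ V_{n+1}\end{pmatrix}=\bar B_k^{(0)}\begin{pmatrix}U_n\\ V_n\end{pmatrix}$ with $$\bar B_k^{(0)}=\frac{k^2}{k^2+(1+s)(N-k)^2}\begin{pmatrix}1-\frac{N-k}{2kN} & \frac{N-k}{2kN}\\ 0 & 1\end{pmatrix}+\frac{(1+s)(N-k)^2}{k^2+(1+s)(N-k)^2}\begin{pmatrix}1 & 0\\ \frac{k}{2N(N-k)} & 1-\frac{k}{2N(N-k)}\end{pmatrix}.$$ In particular, if $T^Y_0<T^Y_N$ then $(U_{T^Y_0},V_{T^Y_0})^T=\begin{pmatrix}1&0\\ \frac{1}{2N^2}&\frac{2N^2-1}{2N^2}\end{pmatrix}(U_{T^Y_0-1},V_{T^Y_0-1})^T$,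 and if $T^Y_N<T^Y_0$ then $(U_{T^Y_N},V_{T^Y_N})^T=\begin{pmatrix}\frac{2N^2-1}{2N^2}&\frac{1}{2N^2}\\ 0&1\end{pmatrix}(U_{T^Y_N-1},V_{T^Y_N-1})^T$.
   Context: Biparental Moran model with selection at death. Fix an integer $N\ge 2$ and a real $s>0$; let $I=\{1,\dots,N\}$ be the set of sites, each occupied by one individual which is either advantaged or disadvantaged. Let $\mathcal{Y}_n\subseteq I$ be the set of sites of advantaged individuals at time $n\in\mathbb{Z}_+$ ($\mathcal{Y}_0$ is a given initial set) and $Y_n=|\mathcal{Y}_n|$. At each time step $n$, conditionally on the past: a "mother" site $\mu_n$ and a "father" site $\pi_n$ are drawn independently and uniformly from $I$, and independently a site $\kappa_n$ is drawn with $\mathbb{P}(\kappa_n=i)$ proportional to the death weight of $i$, which equals $1$ if $i\in\mathcal{Y}_n$ and $1+s$ if $i\notin\mathcal{Y}_n$. The individual at $\kappa_n$ dies and is replaced by an offspring of $\mu_n$ and $\pi_n$, whose type is that of the mother: $\mathcal{Y}_{n+1}=\mathcal{Y}_n\cup\{\kappa_n\}$ if $\mu_n\in\mathcal{Y}_n$ and $\mathcal{Y}_{n+1}=\mathcal{Y}_n\setminus\{\kappa_n\}$ if $\mu_n\notin\mathcal{Y}_n$; all other individuals are unchanged. Pedigree and ancestral weights: $\mathcal{G}_N$ denotes the random oriented graph on $I\times\mathbb{Z}_+$ with, for each $n$, arrows from $(\kappa_n,n+1)$ to $(\mu_n,n)$ and to $(\pi_n,n)$, and from $(i,n+1)$ to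 $(i,n)$ for every $i\neq\kappa_n$. For $n\ge0$, the genealogy of a neutral gene sampled at time $n$ is the process $(X^{(n)}_k)_{0\le k\le n}$ which, conditionally on $\mathcal{G}_N$, is a Markov chain with: if $X^{(n)}_k=x\neq\kappa_{n-k-1}$ then $X^{(n)}_{k+1}=x$, and if $X^{(n)}_k=\kappa_{n-k-1}$ then $X^{(n)}_{k+1}$ equals $\mu_{n-k-1}$ or $\pi_{n-k-1}$ with probability $1/2$ each. Set $A_n(i,j)=\mathbb{P}(X^{(n)}_n=j\mid X^{(n)}_0=i,\mathcal{G}_N)$ and $$\Xi^A_n=\frac{1}{Y_n}\sum_{l\in\mathcal{Y}_n}\sum_{l'\in\mathcal{Y}_0}A_n(l,l'),\qquad \Xi^B_n=\frac{1}{N-Y_n}\sum_{l\notin\mathcal{Y}_n}\sum_{l'\in\mathcal{Y}_0}A_n(l,l')$$ (when the denominators are nonzero). Let $\mathcal{F}^Y_n=\sigma(Y_0,\dots,Y_n)$, $U_n=\mathbb{E}(\Xi^A_n\mid\mathcal{F}^Y_n)$, $V_n=\mathbb{E}(\Xi^B_n\mid\mathcal{F}^Y_n)$ (so $U_0=1$, $V_0=0$). For $y\in\{0,\dots,N\}$, $T^Y_y=\inf\{n:Y_n=y\}$ (with $\inf\emptyset=\infty$). *)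

theory Defs
  imports "HOL-Probability.Probability"
begin

text \<open>Biparental Moran model with selection at death. Sites are I = {1..N}.
A draw at one time step is a triple (mother, father, killed site).\<close>

type_synonym draw = "nat \<times> nat \<times> nat"

definition dw :: "real \<Rightarrow> nat set \<Rightarrow> nat \<Rightarrow> real" where
  "dw s Y i = (if i \<in> Y then 1 else 1 + s)"

definition kill_pmf :: "nat \<Rightarrow> real \<Rightarrow> nat set \<Rightarrow> nat pmf" where
  "kill_pmf N s Y = embed_pmf (\<lambda>i. if i \<in> {1..N}
      then dw s Y i / (\<Sum>j\<in>{1..N}. dw s Y j) else 0)"

definition draw_pmf :: "nat \<Rightarrow> real \<Rightarrow> nat set \<Rightarrow> draw pmf" where
  "draw_pmf N s Y =
     bind_pmf (pmf_of_set {1..N}) (\<lambda>mu.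
     bind_pmf (pmf_of_set {1..N}) (\<lambda>pa.
     map_pmf (\<lambda>ka. (mu, pa, ka)) (kill_pmf N s Y)))"

definition step :: "nat set \<Rightarrow> draw \<Rightarrow> nat set" where
  "step Y d = (case d of (mu, pa, ka) \<Rightarrow>
      if mu \<in> Y then insert ka Y else Y - {ka})"

fun paths :: "nat \<Rightarrow> real \<Rightarrow> nat \<Rightarrow> nat set \<Rightarrow> draw list pmf" where
  "paths N s 0 Y = return_pmf []"
| "paths N s (Suc n) Y =
     bind_pmf (draw_pmf N s Y) (\<lambda>d. map_pmf (\<lambda>ds. d # ds) (paths N s n (step Y d)))"

text \<open>The advantaged set after the draws ds, and the path (Y_0, ..., Y_n) of its sizes.\<close>
definition Yset :: "nat set \<Rightarrow> draw list \<Rightarrow> nat set" where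
  "Yset Y0 ds = foldl step Y0 ds"

definition ypath :: "nat set \<Rightarrow> draw list \<Rightarrow> nat list" where
  "ypath Y0 ds = map (\<lambda>m. card (Yset Y0 (take m ds))) [0..<Suc (length ds)]"

text \<open>One backward step of the neutral-gene genealogy through draw d:
from site x (at time m+1) to site y (at time m).\<close>
definition gkernel :: "draw \<Rightarrow> nat \<Rightarrow> nat \<Rightarrow> real" where
  "gkernel d x y = (case d of (mu, pa, ka) \<Rightarrow>
      if x \<noteq> ka then (if y = x then 1 else 0)
      else (if y = mu then 1/2 else 0) + (if y = pa then 1/2 else 0))"

text \<open>Backward composition over a list of draws given in reverse chronological order.\<close>
fun Arev :: "nat \<Rightarrow> draw list \<Rightarrow> nat \<Rightarrow> nat \<Rightarrow> real" where
  "Arev N [] i j = (if i = j then 1 else 0)"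
| "Arev N (d # rds) i j = (\<Sum>x\<in>{1..N}. gkernel d i x * Arev N rds x j)"

text \<open>A_n(i,j) = P(X^(n)_n = j | X^(n)_0 = i, pedigree), where ds = draws at times 0..n-1.\<close>
definition Agen :: "nat \<Rightarrow> draw list \<Rightarrow> nat \<Rightarrow> nat \<Rightarrow> real" where
  "Agen N ds = Arev N (rev ds)"

definition XiA :: "nat \<Rightarrow> nat set \<Rightarrow> draw list \<Rightarrow> real" where
  "XiA N Y0 ds = (\<Sum>l\<in>Yset Y0 ds. \<Sum>l'\<in>Y0. Agen N ds l l') / real (card (Yset Y0 ds))"

definition XiB :: "nat \<Rightarrow> nat set \<Rightarrow> draw list \<Rightarrow> real" where
  "XiB N Y0 ds = (\<Sum>l\<in>{1..N} - Yset Y0 ds. \<Sum>l'\<in>Y0. Agen N ds l l')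
                   / real (N - card (Yset Y0 ds))"

text \<open>U_n and V_n: conditional expectations of Xi^A_n, Xi^B_n given the observed
path (Y_0,...,Y_n) = ys (meaningful on paths of positive probability).\<close>
definition Ucond :: "nat \<Rightarrow> real \<Rightarrow> nat set \<Rightarrow> nat \<Rightarrow> nat list \<Rightarrow> real" where
  "Ucond N s Y0 n ys =
     measure_pmf.expectation (cond_pmf (paths N s n Y0) {ds. ypath Y0 ds = ys}) (XiA N Y0)"

definition Vcond :: "nat \<Rightarrow> real \<Rightarrow> nat set \<Rightarrow> nat \<Rightarrow> nat list \<Rightarrow> real" where
  "Vcond N s Y0 n ys =
     measure_pmf.expectation (cond_pmf (paths N s n Y0) {ds. ypath Y0 ds = ys}) (XiB N Y0)"

definition possible :: "nat \<Rightarrow> real \<Rightarrow> nat set \<Rightarrow> nat \<Rightarrow> nat list \<Rightarrow> bool" where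
  "possible N s Y0 n ys \<longleftrightarrow> set_pmf (paths N s n Y0) \<inter> {ds. ypath Y0 ds = ys} \<noteq> {}"

end

theory Submission
  imports Defs
begin

text \<open>Let \<open>k = Y\<^sub>n\<close>, and call the advantaged sites A and the others B. Given the past, \<open>Y\<close>
goes up iff the mother is in A and the killed site in B, goes down iff the mother is in B and the
killed site in A, and stays otherwise. As the father is uniform and the death weights only depend on
the type, conditionally on the kind of step the draw is uniform on the corresponding class of
(mother, father, killed site); a stay is a mixture of the classes AA and BB with weights
proportional to \<open>k\<^sup>2\<close> and \<open>(1 + s)(N - k)\<^sup>2\<close>. One generation back, the probability that the
newborn's gene descends from \<open>Y\<^sub>0\<close> is the average of that of its two parents, so averaging the
new \<open>\<Xi>\<^sup>A, \<Xi>\<^sup>B\<close> over a class gives an affine combination of the old ones, with the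
coefficients of the matrices. These coefficients depend on the past only through \<open>k\<close>, so
conditioning on the whole path of \<open>Y\<close> transfers the identities to \<open>U, V\<close>; absorption at 0 or
\<open>N\<close> is the case \<open>k = 1\<close> or \<open>k = N - 1\<close>.\<close>

section \<open>The law of one draw\<close>

lemma pmf_kill_pmf:
  assumes "N \<ge> 1" "s > 0"
  shows "pmf (kill_pmf N s Y) i =
    (if i \<in> {1..N} then dw s Y i / (\<Sum>j\<in>{1..N}. dw s Y j) else 0)"
proof -
  let ?Z = "\<Sum>j\<in>{1..N}. dw s Y j"
  let ?f = "\<lambda>i. if i \<in> {1..N} then dw s Y i / ?Z else 0"
  have "?Z > 0"
    using assms by (intro sum_pos) (auto simp: dw_def)
  then have nonneg: "0 \<le> ?f x" for x
    using assms by (auto simp: dw_def)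
  have "(\<integral>\<^sup>+x. ennreal (?f x) \<partial>count_space UNIV) = (\<Sum>x\<in>{1..N}. ennreal (?f x))"
    by (rule nn_integral_count_space') auto
  also have "\<dots> = ennreal (\<Sum>x\<in>{1..N}. ?f x)"
    using nonneg by (rule sum_ennreal)
  also have "(\<Sum>x\<in>{1..N}. ?f x) = 1"
    using \<open>?Z > 0\<close> by (simp add: sum_divide_distrib[symmetric])
  finally show ?thesis
    unfolding kill_pmf_def using nonneg by (subst pmf_embed_pmf) auto
qed

lemma set_pmf_kill_pmf: "N \<ge> 1 \<Longrightarrow> s > 0 \<Longrightarrow> set_pmf (kill_pmf N s Y) \<subseteq> {1..N}"
  by (auto simp: set_pmf_eq pmf_kill_pmf split: if_splits)

lemma set_pmf_draw_pmf:
  "N \<ge> 1 \<Longrightarrow> s > 0 \<Longrightarrow> set_pmf (draw_pmf N s Y) \<subseteq> {1..N} \<times> {1..N} \<times> {1..N}"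
  using set_pmf_kill_pmf unfolding draw_pmf_def by fastforce

lemma finite_set_pmf_draw_pmf: "N \<ge> 1 \<Longrightarrow> s > 0 \<Longrightarrow> finite (set_pmf (draw_pmf N s Y))"
  using set_pmf_draw_pmf by (rule finite_subset) auto

lemma card_interval_diff: "Y \<subseteq> {1..N} \<Longrightarrow> card ({1..N} - Y) = N - card Y"
  by (simp add: card_Diff_subset finite_subset)

lemma sum_dw:
  assumes "Y \<subseteq> {1..N}"
  shows "(\<Sum>j\<in>{1..N}. dw s Y j) = real (card Y) + (1 + s) * real (N - card Y)"
proof -
  have "(\<Sum>j\<in>{1..N}. dw s Y j) = (\<Sum>j\<in>{1..N} - Y. dw s Y j) + (\<Sum>j\<in>Y. dw s Y j)"
    using assms by (intro sum.subset_diff) auto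
  also have "\<dots> = (1 + s) * real (card ({1..N} - Y)) + real (card Y)"
    by (simp add: dw_def)
  finally show ?thesis
    using card_interval_diff[OF assms] by simp
qed

section \<open>Averages over classes of draws\<close>

definition class_sum :: "nat \<Rightarrow> nat set \<Rightarrow> nat set \<Rightarrow> (draw \<Rightarrow> real) \<Rightarrow> real" where
  "class_sum N M K h = (\<Sum>mu\<in>M. \<Sum>pa\<in>{1..N}. \<Sum>ka\<in>K. h (mu, pa, ka))"

definition class_mean :: "nat \<Rightarrow> nat set \<Rightarrow> nat set \<Rightarrow> (draw \<Rightarrow> real) \<Rightarrow> real" where
  "class_mean N M K h = class_sum N M K h / (real (card M) * real N * real (card K))"

definition set_mean :: "nat set \<Rightarrow> (nat \<Rightarrow> real) \<Rightarrow> real" where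
  "set_mean L F = sum F L / real (card L)"

lemma card_mult_set_mean: "finite L \<Longrightarrow> real (card L) * set_mean L F = sum F L"
  by (cases "L = {}") (simp_all add: set_mean_def)

lemma class_sum_eq_class_mean:
  assumes "finite M" "finite K"
  shows "class_sum N M K h = real (card M) * real N * real (card K) * class_mean N M K h"
proof (cases "M = {} \<or> K = {} \<or> N = 0")
  case True
  then show ?thesis by (auto simp: class_sum_def class_mean_def)
next
  case False
  then show ?thesis using assms by (simp add: class_mean_def)
qed

lemma class_mean_affine:
  assumes "finite M" "finite K" "M \<noteq> {}" "K \<noteq> {}" "N \<ge> 1"
    and "\<And>mu pa ka. mu \<in> M \<Longrightarrow> pa \<in> {1..N} \<Longrightarrow> ka \<in> K \<Longrightarrow>
           h (mu, pa, ka) = \<alpha> + \<beta> * F mu + \<gamma> * F pa + \<delta> * F ka"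
  shows "class_mean N M K h = \<alpha> + \<beta> * set_mean M F + \<gamma> * set_mean {1..N} F + \<delta> * set_mean K F"
proof -
  have "class_sum N M K h = (\<Sum>mu\<in>M. \<Sum>pa\<in>{1..N}. \<Sum>ka\<in>K. \<alpha> + \<beta> * F mu + \<gamma> * F pa + \<delta> * F ka)"
    unfolding class_sum_def using assms(6) by (intro sum.cong refl) auto
  also have "\<dots> = real (card M) * N * card K * \<alpha> + \<beta> * N * card K * sum F M
      + \<gamma> * card M * card K * sum F {1..N} + \<delta> * card M * N * sum F K"
    by (simp add: sum.distrib sum_distrib_left[symmetric] sum_distrib_right[symmetric] algebra_simps)
  finally show ?thesis
    using assms(1-5) by (simp add: class_mean_def set_mean_def field_simps)
qed

lemma class_mean_const:
  "finite M \<Longrightarrow> finite K \<Longrightarrow> M \<noteq> {} \<Longrightarrow> K \<noteq> {} \<Longrightarrow> N \<ge> 1 \<Longrightarrow> class_mean N M K (\<lambda>_. c) = c"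
  using class_mean_affine[where \<beta> = 0 and \<gamma> = 0 and \<delta> = 0 and \<alpha> = c] by simp

lemma expectation_draw_pmf_classes:
  assumes "N \<ge> 1" "s > 0" "Y \<subseteq> {1..N}"
  defines "B \<equiv> {1..N} - Y"
  shows "measure_pmf.expectation (draw_pmf N s Y) h =
    (class_sum N Y Y h + (1 + s) * class_sum N Y B h + class_sum N B Y h + (1 + s) * class_sum N B B h)
      / (real N * real N * (real (card Y) + (1 + s) * real (N - card Y)))"
proof -
  let ?Z = "\<Sum>j\<in>{1..N}. dw s Y j"
  have split: "sum g {1..N} = sum g Y + sum g B" for g :: "nat \<Rightarrow> real"
    unfolding B_def using assms(3) by (subst sum.subset_diff[of Y]) auto
  have kill: "measure_pmf.expectation (kill_pmf N s Y) g = (\<Sum>ka\<in>{1..N}. dw s Y ka * g ka) / ?Z" for g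
    by (subst integral_measure_pmf[of "{1..N}"])
       (auto simp: pmf_kill_pmf[OF assms(1,2)] sum_divide_distrib set_pmf_eq split: if_splits)
  have fin: "finite (set_pmf (kill_pmf N s Y))"
    using set_pmf_kill_pmf[OF assms(1,2)] by (rule finite_subset) simp
  have "measure_pmf.expectation (draw_pmf N s Y) h =
      (\<Sum>mu\<in>{1..N}. \<Sum>pa\<in>{1..N}. \<Sum>ka\<in>{1..N}. dw s Y ka * h (mu, pa, ka)) / (real N * real N * ?Z)"
    unfolding draw_pmf_def using assms(1) fin
    by (simp add: pmf_expectation_bind_pmf_of_set kill sum_divide_distrib[symmetric]
        sum_distrib_left[symmetric] field_simps)
  also have "(\<Sum>mu\<in>{1..N}. \<Sum>pa\<in>{1..N}. \<Sum>ka\<in>{1..N}. dw s Y ka * h (mu, pa, ka)) =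
      (\<Sum>mu\<in>{1..N}. \<Sum>pa\<in>{1..N}. (\<Sum>ka\<in>Y. h (mu, pa, ka)) + (1 + s) * (\<Sum>ka\<in>B. h (mu, pa, ka)))"
    unfolding split by (simp add: dw_def B_def sum_distrib_left)
  also have "\<dots> =
      class_sum N Y Y h + (1 + s) * class_sum N Y B h + class_sum N B Y h + (1 + s) * class_sum N B B h"
    unfolding class_sum_def split[of "\<lambda>mu. \<Sum>pa\<in>{1..N}. _ mu pa"]
    by (simp add: sum.distrib sum_distrib_left)
  finally show ?thesis
    by (simp only: sum_dw[OF assms(3)])
qed

lemma card_step:
  assumes "finite Y"
  shows "card (step Y (mu, pa, ka)) =
    (if mu \<in> Y then (if ka \<in> Y then card Y else card Y + 1)
     else (if ka \<in> Y then card Y - 1 else card Y))"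
  using assms by (auto simp: step_def card_insert_if card_Diff_singleton_if)

lemma death_weight_total_pos:
  "N \<ge> 1 \<Longrightarrow> s > 0 \<Longrightarrow> k \<le> N \<Longrightarrow> real k + (1 + s) * real (N - k) > 0"
  by (cases "k = N") (auto intro: add_nonneg_pos)

lemma expectation_draw_up:
  assumes "N \<ge> 1" "s > 0" "Y \<subseteq> {1..N}"
  defines "k \<equiv> card Y"
  shows "measure_pmf.expectation (draw_pmf N s Y) (\<lambda>d. if card (step Y d) = k + 1 then h d else 0) =
    (1 + s) * real k * real (N - k) / (real N * (real k + (1 + s) * real (N - k)))
      * class_mean N Y ({1..N} - Y) h"
proof -
  let ?B = "{1..N} - Y"
  let ?g = "\<lambda>d. if card (step Y d) = k + 1 then h d else 0"
  have fin: "finite Y" "finite ?B" "card ?B = N - k" "k \<le> N"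
    using assms(3) finite_subset card_interval_diff[OF assms(3)] card_mono[of "{1..N}" Y]
    by (auto simp: k_def)
  have "class_sum N Y Y ?g = 0" "class_sum N ?B Y ?g = 0" "class_sum N ?B ?B ?g = 0"
    using fin by (auto simp: class_sum_def card_step k_def[symmetric] intro!: sum.neutral)
  moreover have "class_sum N Y ?B ?g = class_sum N Y ?B h"
    using fin by (auto simp: class_sum_def card_step k_def[symmetric] intro!: sum.cong)
  moreover define Z where "Z = real k + (1 + s) * real (N - k)"
  moreover have "Z > 0"
    using death_weight_total_pos[OF assms(1,2) \<open>k \<le> N\<close>] by (simp add: Z_def)
  ultimately have "measure_pmf.expectation (draw_pmf N s Y) ?g = (1 + s) * class_sum N Y ?B h / (real N * real N * Z)"
    by (simp add: expectation_draw_pmf_classes[OF assms(1-3)] k_def)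
  also have "\<dots> = (1 + s) * real k * real (N - k) / (real N * Z) * class_mean N Y ?B h"
    using \<open>Z > 0\<close> assms(1) fin
    by (simp add: class_sum_eq_class_mean k_def[symmetric] Z_def[symmetric] field_simps del: of_nat_diff)
  finally show ?thesis
    unfolding Z_def .
qed

lemma expectation_draw_down:
  assumes "N \<ge> 1" "s > 0" "Y \<subseteq> {1..N}" "Y \<noteq> {}"
  defines "k \<equiv> card Y"
  shows "measure_pmf.expectation (draw_pmf N s Y) (\<lambda>d. if card (step Y d) = k - 1 then h d else 0) =
    real k * real (N - k) / (real N * (real k + (1 + s) * real (N - k)))
      * class_mean N ({1..N} - Y) Y h"
proof -
  let ?B = "{1..N} - Y"
  let ?g = "\<lambda>d. if card (step Y d) = k - 1 then h d else 0"
  have fin: "finite Y" "finite ?B" "card ?B = N - k" "k \<le> N" "k > 0"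
    using assms(3,4) finite_subset card_interval_diff[OF assms(3)] card_mono[of "{1..N}" Y]
    by (auto simp: k_def card_gt_0_iff)
  have "class_sum N Y Y ?g = 0" "class_sum N Y ?B ?g = 0" "class_sum N ?B ?B ?g = 0"
    using fin by (auto simp: class_sum_def card_step k_def[symmetric] intro!: sum.neutral)
  moreover have "class_sum N ?B Y ?g = class_sum N ?B Y h"
    using fin by (auto simp: class_sum_def card_step k_def[symmetric] intro!: sum.cong)
  moreover define Z where "Z = real k + (1 + s) * real (N - k)"
  moreover have "Z > 0"
    using death_weight_total_pos[OF assms(1,2) \<open>k \<le> N\<close>] by (simp add: Z_def)
  ultimately have "measure_pmf.expectation (draw_pmf N s Y) ?g = class_sum N ?B Y h / (real N * real N * Z)"
    by (simp add: expectation_draw_pmf_classes[OF assms(1-3)] k_def)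
  also have "\<dots> = real k * real (N - k) / (real N * Z) * class_mean N ?B Y h"
    using \<open>Z > 0\<close> assms(1) fin
    by (simp add: class_sum_eq_class_mean k_def[symmetric] Z_def[symmetric] field_simps del: of_nat_diff)
  finally show ?thesis
    unfolding Z_def .
qed

text \<open>The mixture in the matrix for a stay: the two classes of non-moving draws have total
weights \<open>k\<^sup>2 N\<close> and \<open>(1 + s)(N - k)\<^sup>2 N\<close>.\<close>

lemma expectation_draw_stay:
  assumes "N \<ge> 1" "s > 0" "Y \<subseteq> {1..N}"
  defines "k \<equiv> card Y"
  defines "p \<equiv> real k ^ 2 / (real k ^ 2 + (1 + s) * real (N - k) ^ 2)"
    and "q \<equiv> (1 + s) * real (N - k) ^ 2 / (real k ^ 2 + (1 + s) * real (N - k) ^ 2)"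
  shows "measure_pmf.expectation (draw_pmf N s Y) (\<lambda>d. if card (step Y d) = k then h d else 0) =
    (real k ^ 2 + (1 + s) * real (N - k) ^ 2) / (real N * (real k + (1 + s) * real (N - k)))
      * (p * class_mean N Y Y h + q * class_mean N ({1..N} - Y) ({1..N} - Y) h)"
proof -
  let ?B = "{1..N} - Y"
  let ?g = "\<lambda>d. if card (step Y d) = k then h d else 0"
  have fin: "finite Y" "finite ?B" "card ?B = N - k" "k \<le> N" "\<And>y. y \<in> Y \<Longrightarrow> k > 0"
    using assms(3) finite_subset card_interval_diff[OF assms(3)] card_mono[of "{1..N}" Y]
    by (auto simp: k_def card_gt_0_iff)
  have mix_pos: "real k ^ 2 + (1 + s) * real (N - k) ^ 2 > 0"
    using assms(1,2) fin(4) by (cases "k = N") (auto intro: add_nonneg_pos)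
  have "class_sum N Y ?B ?g = 0" "class_sum N ?B Y ?g = 0"
    using fin by (fastforce simp: class_sum_def card_step k_def[symmetric] intro!: sum.neutral)+
  moreover have "class_sum N Y Y ?g = class_sum N Y Y h" "class_sum N ?B ?B ?g = class_sum N ?B ?B h"
    using fin by (auto simp: class_sum_def card_step k_def[symmetric] intro!: sum.cong)
  moreover define Z where "Z = real k + (1 + s) * real (N - k)"
  moreover have "Z > 0"
    using death_weight_total_pos[OF assms(1,2) \<open>k \<le> N\<close>] by (simp add: Z_def)
  ultimately have "measure_pmf.expectation (draw_pmf N s Y) ?g =
      (class_sum N Y Y h + (1 + s) * class_sum N ?B ?B h) / (real N * real N * Z)"
    by (simp add: expectation_draw_pmf_classes[OF assms(1-3)] k_def)
  also have "\<dots> = (real k ^ 2 * class_mean N Y Y h + (1 + s) * real (N - k) ^ 2 * class_mean N ?B ?B h)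
      / (real N * Z)"
    using \<open>Z > 0\<close> assms(1) fin
    by (simp add: class_sum_eq_class_mean k_def[symmetric] field_simps power2_eq_square del: of_nat_diff)
  also have "\<dots> = (real k ^ 2 + (1 + s) * real (N - k) ^ 2) / (real N * Z)
      * (p * class_mean N Y Y h + q * class_mean N ?B ?B h)"
  proof -
    define W where "W = real k ^ 2 + (1 + s) * real (N - k) ^ 2"
    have "p * class_mean N Y Y h + q * class_mean N ?B ?B h
        = (real k ^ 2 * class_mean N Y Y h + (1 + s) * real (N - k) ^ 2 * class_mean N ?B ?B h) / W"
      by (simp add: p_def q_def W_def add_divide_distrib)
    then show ?thesis
      using mix_pos unfolding W_def[symmetric] by simp
  qed
  finally show ?thesis
    unfolding Z_def .
qed

section \<open>One generation of the genealogy\<close>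

definition parent_mean :: "nat \<Rightarrow> draw \<Rightarrow> (nat \<Rightarrow> real) \<Rightarrow> nat \<Rightarrow> real" where
  "parent_mean N d F l = (\<Sum>x\<in>{1..N}. gkernel d l x * F x)"

definition new_adv_mean :: "nat \<Rightarrow> nat set \<Rightarrow> (nat \<Rightarrow> real) \<Rightarrow> draw \<Rightarrow> real" where
  "new_adv_mean N Y F d = sum (parent_mean N d F) (step Y d) / real (card (step Y d))"

definition new_dis_mean :: "nat \<Rightarrow> nat set \<Rightarrow> (nat \<Rightarrow> real) \<Rightarrow> draw \<Rightarrow> real" where
  "new_dis_mean N Y F d = sum (parent_mean N d F) ({1..N} - step Y d) / real (N - card (step Y d))"

lemma parent_mean_eq:
  assumes "mu \<in> {1..N}" "pa \<in> {1..N}" "l \<in> {1..N}"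
  shows "parent_mean N (mu, pa, ka) F l = (if l = ka then (F mu + F pa) / 2 else F l)"
proof -
  have "gkernel (mu, pa, ka) l x * F x =
      (if l = ka then (if x = mu then F x / 2 else 0) + (if x = pa then F x / 2 else 0)
       else if x = l then F x else 0)" for x
    by (simp add: gkernel_def)
  then show ?thesis
    using assms by (simp add: parent_mean_def sum.distrib)
qed

lemma sum_parent_mean:
  assumes "L \<subseteq> {1..N}" "mu \<in> {1..N}" "pa \<in> {1..N}"
  shows "sum (parent_mean N (mu, pa, ka) F) L = sum F L + (if ka \<in> L then (F mu + F pa) / 2 - F ka else 0)"
proof (cases "ka \<in> L")
  case True
  have "finite L"
    using assms(1) finite_subset by blast
  have "sum (parent_mean N (mu, pa, ka) F) (L - {ka}) = sum F (L - {ka})"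
    using assms by (intro sum.cong) (auto simp: parent_mean_eq)
  moreover have "parent_mean N (mu, pa, ka) F ka = (F mu + F pa) / 2"
    using True assms by (auto simp: parent_mean_eq)
  ultimately show ?thesis
    using True \<open>finite L\<close> by (simp add: sum.remove[of L ka])
next
  case False
  then have "sum (parent_mean N (mu, pa, ka) F) L = sum F L"
    using assms by (intro sum.cong) (auto simp: parent_mean_eq)
  then show ?thesis
    using False by simp
qed

lemma set_mean_interval:
  assumes "Y \<subseteq> {1..N}"
  shows "real N * set_mean {1..N} F =
    real (card Y) * set_mean Y F + real (N - card Y) * set_mean ({1..N} - Y) F"
proof -
  have "sum F {1..N} = sum F Y + sum F ({1..N} - Y)"
    using assms by (subst sum.subset_diff[of Y]) auto
  then show ?thesis
    using assms card_mult_set_mean[of "{1..N}" F] card_mult_set_mean[of Y F]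
      card_mult_set_mean[of "{1..N} - Y" F] card_interval_diff[OF assms]
    by (simp add: finite_subset)
qed

text \<open>In the suffixes \<open>AB\<close>, \<open>BA\<close>, \<open>AA\<close>, \<open>BB\<close> the first letter is the type of the mother and the
second that of the killed individual (\<open>A\<close> advantaged, \<open>B\<close> disadvantaged).\<close>

context
  fixes N k :: nat and Y :: "nat set" and F :: "nat \<Rightarrow> real"
  assumes Y: "Y \<subseteq> {1..N}" "card Y = k" "0 < k" "k < N"
begin

private lemma state_sets:
  "finite Y" "Y \<noteq> {}" "finite ({1..N} - Y)" "{1..N} - Y \<noteq> {}" "N \<ge> 1"
  "card ({1..N} - Y) = N - k" "{1..N} - Y \<subseteq> {1..N}"
  using Y finite_subset card_interval_diff[OF Y(1)] by (auto simp: card_gt_0_iff)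

private lemma state_means:
  "sum F Y = real k * set_mean Y F" "sum F ({1..N} - Y) = real (N - k) * set_mean ({1..N} - Y) F"
  "set_mean {1..N} F = (real k * set_mean Y F + real (N - k) * set_mean ({1..N} - Y) F)
      / (real k + real (N - k))"
  "real N = real k + real (N - k)" "real (k + 1) = real k + 1" "real (N - (k + 1)) = real (N - k) - 1"
  "real (k - 1) = real k - 1" "real (N - k + 1) = real (N - k) + 1"
  using card_mult_set_mean[of Y F] card_mult_set_mean[of "{1..N} - Y" F] set_mean_interval[OF Y(1), of F]
    state_sets Y by (auto simp: field_simps)

private lemma state_nonzero:
  "real k \<noteq> 0" "real (N - k) \<noteq> 0" "real k + real (N - k) \<noteq> 0" "real k + 1 \<noteq> 0"
  "real (N - k) + 1 \<noteq> 0"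
  using Y by auto

lemma class_mean_new_adv_AB:
  "class_mean N Y ({1..N} - Y) (new_adv_mean N Y F) =
    (1 - real (N - k) / (2 * real N * real (k + 1))) * set_mean Y F
    + real (N - k) / (2 * real N * real (k + 1)) * set_mean ({1..N} - Y) F"
proof -
  have "class_mean N Y ({1..N} - Y) (new_adv_mean N Y F) =
      sum F Y / (k + 1) + 1 / (2 * (k + 1)) * set_mean Y F + 1 / (2 * (k + 1)) * set_mean {1..N} F
        + 0 * set_mean ({1..N} - Y) F"
  proof (rule class_mean_affine)
    fix mu pa ka assume d: "mu \<in> Y" "pa \<in> {1..N}" "ka \<in> {1..N} - Y"
    then have "step Y (mu, pa, ka) = insert ka Y" "card (insert ka Y) = k + 1"
      using Y state_sets by (auto simp: step_def)
    moreover have "sum (parent_mean N (mu, pa, ka) F) (insert ka Y) = sum F Y + (F mu + F pa) / 2"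
      using d Y state_sets by (subst sum_parent_mean) auto
    ultimately show "new_adv_mean N Y F (mu, pa, ka) =
        sum F Y / (k + 1) + 1 / (2 * (k + 1)) * F mu + 1 / (2 * (k + 1)) * F pa + 0 * F ka"
      by (simp add: new_adv_mean_def add_divide_distrib)
  qed (use state_sets in auto)
  also have "\<dots> = (1 - real (N - k) / (2 * real N * real (k + 1))) * set_mean Y F
      + real (N - k) / (2 * real N * real (k + 1)) * set_mean ({1..N} - Y) F"
    using state_nonzero unfolding state_means by (simp add: divide_simps del: of_nat_diff) (simp add: algebra_simps)
  finally show ?thesis .
qed

lemma class_mean_new_dis_AB:
  assumes "k + 1 < N"
  shows "class_mean N Y ({1..N} - Y) (new_dis_mean N Y F) = set_mean ({1..N} - Y) F"
proof -
  have "class_mean N Y ({1..N} - Y) (new_dis_mean N Y F) =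
      sum F ({1..N} - Y) / (N - (k + 1)) + 0 * set_mean Y F + 0 * set_mean {1..N} F
        + (- 1 / (N - (k + 1))) * set_mean ({1..N} - Y) F"
  proof (rule class_mean_affine)
    fix mu pa ka assume d: "mu \<in> Y" "pa \<in> {1..N}" "ka \<in> {1..N} - Y"
    then have "step Y (mu, pa, ka) = insert ka Y" "card (insert ka Y) = k + 1"
        "{1..N} - insert ka Y = ({1..N} - Y) - {ka}"
      using Y state_sets by (auto simp: step_def)
    moreover have "sum (parent_mean N (mu, pa, ka) F) (({1..N} - Y) - {ka}) = sum F ({1..N} - Y) - F ka"
      using d Y state_sets by (subst sum_parent_mean) (auto simp: sum_diff1)
    ultimately show "new_dis_mean N Y F (mu, pa, ka) =
        sum F ({1..N} - Y) / (N - (k + 1)) + 0 * F mu + 0 * F pa + (- 1 / (N - (k + 1))) * F ka"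
      by (simp add: new_dis_mean_def diff_divide_distrib)
  qed (use state_sets in auto)
  also have "\<dots> = set_mean ({1..N} - Y) F"
    using state_nonzero assms unfolding state_means by (simp add: divide_simps del: of_nat_diff) (simp add: algebra_simps)
  finally show ?thesis .
qed

lemma class_mean_new_adv_BA:
  assumes "1 < k"
  shows "class_mean N ({1..N} - Y) Y (new_adv_mean N Y F) = set_mean Y F"
proof -
  have "class_mean N ({1..N} - Y) Y (new_adv_mean N Y F) =
      sum F Y / (k - 1) + 0 * set_mean ({1..N} - Y) F + 0 * set_mean {1..N} F
        + (- 1 / (k - 1)) * set_mean Y F"
  proof (rule class_mean_affine)
    fix mu pa ka assume d: "mu \<in> {1..N} - Y" "pa \<in> {1..N}" "ka \<in> Y"
    then have "step Y (mu, pa, ka) = Y - {ka}" "card (Y - {ka}) = k - 1"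
      using Y state_sets by (auto simp: step_def)
    moreover have "sum (parent_mean N (mu, pa, ka) F) (Y - {ka}) = sum F Y - F ka"
      using d Y state_sets by (subst sum_parent_mean) (auto simp: sum_diff1)
    ultimately show "new_adv_mean N Y F (mu, pa, ka) =
        sum F Y / (k - 1) + 0 * F mu + 0 * F pa + (- 1 / (k - 1)) * F ka"
      by (simp add: new_adv_mean_def diff_divide_distrib)
  qed (use state_sets in auto)
  also have "\<dots> = set_mean Y F"
    using state_nonzero assms unfolding state_means by (simp add: divide_simps del: of_nat_diff) (simp add: algebra_simps)
  finally show ?thesis .
qed

lemma class_mean_new_dis_BA:
  "class_mean N ({1..N} - Y) Y (new_dis_mean N Y F) =
    real k / (2 * real N * real (N - k + 1)) * set_mean Y F
    + (1 - real k / (2 * real N * real (N - k + 1))) * set_mean ({1..N} - Y) F"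
proof -
  have "class_mean N ({1..N} - Y) Y (new_dis_mean N Y F) =
      sum F ({1..N} - Y) / (N - k + 1) + 1 / (2 * (N - k + 1)) * set_mean ({1..N} - Y) F
        + 1 / (2 * (N - k + 1)) * set_mean {1..N} F + 0 * set_mean Y F"
  proof (rule class_mean_affine)
    fix mu pa ka assume d: "mu \<in> {1..N} - Y" "pa \<in> {1..N}" "ka \<in> Y"
    then have "step Y (mu, pa, ka) = Y - {ka}" "N - card (Y - {ka}) = N - k + 1"
        "{1..N} - (Y - {ka}) = insert ka ({1..N} - Y)"
      using Y state_sets by (auto simp: step_def)
    moreover have "sum (parent_mean N (mu, pa, ka) F) (insert ka ({1..N} - Y))
        = sum F ({1..N} - Y) + (F mu + F pa) / 2"
      using d Y state_sets by (subst sum_parent_mean) auto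
    ultimately show "new_dis_mean N Y F (mu, pa, ka) =
        sum F ({1..N} - Y) / (N - k + 1) + 1 / (2 * (N - k + 1)) * F mu
          + 1 / (2 * (N - k + 1)) * F pa + 0 * F ka"
      by (simp add: new_dis_mean_def add_divide_distrib)
  qed (use state_sets in auto)
  also have "\<dots> = real k / (2 * real N * real (N - k + 1)) * set_mean Y F
      + (1 - real k / (2 * real N * real (N - k + 1))) * set_mean ({1..N} - Y) F"
    using state_nonzero unfolding state_means by (simp add: divide_simps del: of_nat_diff) (simp add: algebra_simps)
  finally show ?thesis .
qed

lemma class_mean_new_adv_AA:
  "class_mean N Y Y (new_adv_mean N Y F) =
    (1 - real (N - k) / (2 * real k * real N)) * set_mean Y F
    + real (N - k) / (2 * real k * real N) * set_mean ({1..N} - Y) F"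
proof -
  have "class_mean N Y Y (new_adv_mean N Y F) =
      sum F Y / k + 1 / (2 * k) * set_mean Y F + 1 / (2 * k) * set_mean {1..N} F
        + (- 1 / k) * set_mean Y F"
  proof (rule class_mean_affine)
    fix mu pa ka assume d: "mu \<in> Y" "pa \<in> {1..N}" "ka \<in> Y"
    then have "step Y (mu, pa, ka) = Y"
      by (auto simp: step_def)
    moreover have "sum (parent_mean N (mu, pa, ka) F) Y = sum F Y + (F mu + F pa) / 2 - F ka"
      using d Y state_sets by (subst sum_parent_mean) auto
    ultimately show "new_adv_mean N Y F (mu, pa, ka) =
        sum F Y / k + 1 / (2 * k) * F mu + 1 / (2 * k) * F pa + (- 1 / k) * F ka"
      using Y by (simp add: new_adv_mean_def add_divide_distrib diff_divide_distrib)
  qed (use state_sets in auto)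
  also have "\<dots> = (1 - real (N - k) / (2 * real k * real N)) * set_mean Y F
      + real (N - k) / (2 * real k * real N) * set_mean ({1..N} - Y) F"
    using state_nonzero unfolding state_means by (simp add: divide_simps del: of_nat_diff) (simp add: algebra_simps)
  finally show ?thesis .
qed

lemma class_mean_new_dis_AA:
  "class_mean N Y Y (new_dis_mean N Y F) = set_mean ({1..N} - Y) F"
proof -
  have "class_mean N Y Y (new_dis_mean N Y F) =
      sum F ({1..N} - Y) / (N - k) + 0 * set_mean Y F + 0 * set_mean {1..N} F + 0 * set_mean Y F"
  proof (rule class_mean_affine)
    fix mu pa ka assume d: "mu \<in> Y" "pa \<in> {1..N}" "ka \<in> Y"
    then have "step Y (mu, pa, ka) = Y"
      by (auto simp: step_def)
    moreover have "sum (parent_mean N (mu, pa, ka) F) ({1..N} - Y) = sum F ({1..N} - Y)"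
      using d Y state_sets by (subst sum_parent_mean) auto
    ultimately show "new_dis_mean N Y F (mu, pa, ka) =
        sum F ({1..N} - Y) / (N - k) + 0 * F mu + 0 * F pa + 0 * F ka"
      using Y by (simp add: new_dis_mean_def)
  qed (use state_sets in auto)
  also have "\<dots> = set_mean ({1..N} - Y) F"
    using state_nonzero unfolding state_means by (simp del: of_nat_diff)
  finally show ?thesis .
qed

lemma class_mean_new_adv_BB:
  "class_mean N ({1..N} - Y) ({1..N} - Y) (new_adv_mean N Y F) = set_mean Y F"
proof -
  have "class_mean N ({1..N} - Y) ({1..N} - Y) (new_adv_mean N Y F) =
      sum F Y / k + 0 * set_mean ({1..N} - Y) F + 0 * set_mean {1..N} F + 0 * set_mean ({1..N} - Y) F"
  proof (rule class_mean_affine)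
    fix mu pa ka assume d: "mu \<in> {1..N} - Y" "pa \<in> {1..N}" "ka \<in> {1..N} - Y"
    then have "step Y (mu, pa, ka) = Y"
      by (auto simp: step_def)
    moreover have "sum (parent_mean N (mu, pa, ka) F) Y = sum F Y"
      using d Y state_sets by (subst sum_parent_mean) auto
    ultimately show "new_adv_mean N Y F (mu, pa, ka) = sum F Y / k + 0 * F mu + 0 * F pa + 0 * F ka"
      using Y by (simp add: new_adv_mean_def)
  qed (use state_sets in auto)
  also have "\<dots> = set_mean Y F"
    using state_nonzero unfolding state_means by simp
  finally show ?thesis .
qed

lemma class_mean_new_dis_BB:
  "class_mean N ({1..N} - Y) ({1..N} - Y) (new_dis_mean N Y F) =
    real k / (2 * real N * real (N - k)) * set_mean Y F
    + (1 - real k / (2 * real N * real (N - k))) * set_mean ({1..N} - Y) F"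
proof -
  have "class_mean N ({1..N} - Y) ({1..N} - Y) (new_dis_mean N Y F) =
      sum F ({1..N} - Y) / (N - k) + 1 / (2 * (N - k)) * set_mean ({1..N} - Y) F
        + 1 / (2 * (N - k)) * set_mean {1..N} F + (- 1 / (N - k)) * set_mean ({1..N} - Y) F"
  proof (rule class_mean_affine)
    fix mu pa ka assume d: "mu \<in> {1..N} - Y" "pa \<in> {1..N}" "ka \<in> {1..N} - Y"
    then have "step Y (mu, pa, ka) = Y"
      by (auto simp: step_def)
    moreover have "sum (parent_mean N (mu, pa, ka) F) ({1..N} - Y)
        = sum F ({1..N} - Y) + (F mu + F pa) / 2 - F ka"
      using d Y state_sets by (subst sum_parent_mean) auto
    ultimately show "new_dis_mean N Y F (mu, pa, ka) =
        sum F ({1..N} - Y) / (N - k) + 1 / (2 * (N - k)) * F mu + 1 / (2 * (N - k)) * F pa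
          + (- 1 / (N - k)) * F ka"
      using Y by (simp add: new_dis_mean_def add_divide_distrib diff_divide_distrib)
  qed (use state_sets in auto)
  also have "\<dots> = real k / (2 * real N * real (N - k)) * set_mean Y F
      + (1 - real k / (2 * real N * real (N - k))) * set_mean ({1..N} - Y) F"
    using state_nonzero unfolding state_means by (simp add: divide_simps del: of_nat_diff) (simp add: algebra_simps)
  finally show ?thesis .
qed

end

section \<open>Conditioning on the path of \<open>Y\<close>\<close>

lemma Yset_snoc: "Yset Y0 (ds @ [d]) = step (Yset Y0 ds) d"
  by (simp add: Yset_def)

lemma paths_Suc_snoc:
  "paths N s (Suc n) Y = paths N s n Y \<bind> (\<lambda>ds. map_pmf (\<lambda>d. ds @ [d]) (draw_pmf N s (Yset Y ds)))"
proof (induction n arbitrary: Y)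
  case 0
  then show ?case
    by (simp add: Yset_def map_pmf_def bind_return_pmf bind_return_pmf')
next
  case (Suc n)
  show ?case
    by (subst paths.simps(2), subst Suc, subst paths.simps(2))
       (simp add: map_pmf_def bind_assoc_pmf bind_return_pmf Yset_def)
qed

lemma finite_set_pmf_paths: "N \<ge> 1 \<Longrightarrow> s > 0 \<Longrightarrow> finite (set_pmf (paths N s n Y))"
  by (induction n arbitrary: Y) (simp_all add: finite_set_pmf_draw_pmf)

lemma length_paths: "ds \<in> set_pmf (paths N s n Y) \<Longrightarrow> length ds = n"
  by (induction n arbitrary: Y ds) auto

lemma Yset_paths_subset:
  assumes "N \<ge> 1" "s > 0"
  shows "Y \<subseteq> {1..N} \<Longrightarrow> ds \<in> set_pmf (paths N s n Y) \<Longrightarrow> Yset Y ds \<subseteq> {1..N}"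
proof (induction n arbitrary: Y ds)
  case 0
  then show ?case
    by (simp add: Yset_def)
next
  case (Suc n)
  then obtain d ds' where "d \<in> set_pmf (draw_pmf N s Y)" "ds' \<in> set_pmf (paths N s n (step Y d))"
      "ds = d # ds'"
    by auto
  moreover have "step Y d \<subseteq> {1..N}"
    using Suc.prems(1) set_pmf_draw_pmf[OF assms, of Y] \<open>d \<in> _\<close>
    by (cases d) (auto simp: step_def)
  ultimately show ?case
    using Suc.IH by (simp add: Yset_def)
qed

lemma length_ypath: "length (ypath Y0 ds) = Suc (length ds)"
  by (simp add: ypath_def)

lemma ypath_snoc: "ypath Y0 (ds @ [d]) = ypath Y0 ds @ [card (step (Yset Y0 ds) d)]"
proof -
  have "map (\<lambda>m. card (Yset Y0 (take m (ds @ [d])))) [0..<Suc (length ds)]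
      = map (\<lambda>m. card (Yset Y0 (take m ds))) [0..<Suc (length ds)]"
    by (intro map_cong refl) auto
  then show ?thesis
    by (simp add: ypath_def Yset_snoc[symmetric])
qed

lemma nth_length_ypath: "ypath Y0 ds ! length ds = card (Yset Y0 ds)"
  by (simp add: ypath_def nth_append del: upt_Suc)

lemma ypath_snoc_eq_iff:
  assumes "length ds = n" "length ys = Suc (Suc n)"
  shows "ypath Y0 (ds @ [d]) = ys \<longleftrightarrow>
    ypath Y0 ds = take (Suc n) ys \<and> card (step (Yset Y0 ds) d) = ys ! Suc n"
proof -
  have "ys = take (Suc n) ys @ [ys ! Suc n]"
    using assms(2) by (simp add: take_Suc_conv_app_nth[symmetric])
  then show ?thesis
    using assms by (metis append1_eq_conv ypath_snoc)
qed

lemma length_possible: "possible N s Y0 n ys \<Longrightarrow> length ys = Suc n"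
  by (auto simp: possible_def length_ypath dest: length_paths)

lemma possible_SucE:
  assumes "possible N s Y0 (Suc n) ys"
  obtains ds d where "ds \<in> set_pmf (paths N s n Y0)" "ypath Y0 ds = take (Suc n) ys"
    "d \<in> set_pmf (draw_pmf N s (Yset Y0 ds))" "card (step (Yset Y0 ds) d) = ys ! Suc n"
proof -
  obtain ds' where "ds' \<in> set_pmf (paths N s (Suc n) Y0)" "ypath Y0 ds' = ys"
    using assms unfolding possible_def by auto
  moreover from this(1) obtain ds d where "ds \<in> set_pmf (paths N s n Y0)"
      "d \<in> set_pmf (draw_pmf N s (Yset Y0 ds))" "ds' = ds @ [d]"
    unfolding paths_Suc_snoc by (auto simp del: paths.simps)
  ultimately show ?thesis
    using that ypath_snoc_eq_iff[OF length_paths length_possible[OF assms]] by blast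
qed

lemma card_Yset_eq_nth:
  assumes "ds \<in> set_pmf (paths N s n Y0)" "ypath Y0 ds = take (Suc n) ys" "length ys = Suc (Suc n)"
  shows "card (Yset Y0 ds) = ys ! n"
  using assms nth_length_ypath[of Y0 ds] length_paths[OF assms(1)] by simp

definition descent_prob :: "nat \<Rightarrow> nat set \<Rightarrow> draw list \<Rightarrow> nat \<Rightarrow> real" where
  "descent_prob N Y0 ds x = (\<Sum>l'\<in>Y0. Agen N ds x l')"

lemma descent_prob_snoc: "descent_prob N Y0 (ds @ [d]) = parent_mean N d (descent_prob N Y0 ds)"
  by (auto simp: fun_eq_iff descent_prob_def parent_mean_def Agen_def sum_distrib_left sum.swap[of _ Y0])

lemma XiA_snoc: "XiA N Y0 (ds @ [d]) = new_adv_mean N (Yset Y0 ds) (descent_prob N Y0 ds) d"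
  by (simp add: XiA_def new_adv_mean_def Yset_snoc descent_prob_snoc[symmetric] descent_prob_def)

lemma XiB_snoc: "XiB N Y0 (ds @ [d]) = new_dis_mean N (Yset Y0 ds) (descent_prob N Y0 ds) d"
  by (simp add: XiB_def new_dis_mean_def Yset_snoc descent_prob_snoc[symmetric] descent_prob_def)

lemma XiA_eq_set_mean: "XiA N Y0 ds = set_mean (Yset Y0 ds) (descent_prob N Y0 ds)"
  by (simp add: XiA_def set_mean_def descent_prob_def)

lemma XiB_eq_set_mean:
  "Yset Y0 ds \<subseteq> {1..N} \<Longrightarrow> XiB N Y0 ds = set_mean ({1..N} - Yset Y0 ds) (descent_prob N Y0 ds)"
  by (drule card_interval_diff) (simp add: XiB_def set_mean_def descent_prob_def)

lemma expectation_cond_pmf: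
  fixes f :: "'a \<Rightarrow> real"
  assumes "finite (set_pmf p)" "set_pmf p \<inter> A \<noteq> {}"
  shows "measure_pmf.expectation (cond_pmf p A) f =
    measure_pmf.expectation p (\<lambda>x. if x \<in> A then f x else 0) / measure_pmf.prob p A"
proof -
  have "measure_pmf.expectation (cond_pmf p A) f = (\<Sum>x\<in>set_pmf p. f x * pmf (cond_pmf p A) x)"
    using assms by (intro integral_measure_pmf_real) auto
  also have "\<dots> = (\<Sum>x\<in>set_pmf p. (if x \<in> A then f x else 0) * pmf p x) / measure_pmf.prob p A"
    using assms(2) by (auto simp: pmf_cond sum_divide_distrib intro!: sum.cong split: if_splits)
  also have "(\<Sum>x\<in>set_pmf p. (if x \<in> A then f x else 0) * pmf p x) =
      measure_pmf.expectation p (\<lambda>x. if x \<in> A then f x else 0)"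
    using assms(1) by (intro integral_measure_pmf_real[symmetric]) auto
  finally show ?thesis .
qed

lemma expectation_paths_Suc:
  fixes f :: "draw list \<Rightarrow> real"
  assumes "N \<ge> 1" "s > 0" "length ys = Suc (Suc n)"
  shows "measure_pmf.expectation (paths N s (Suc n) Y0) (\<lambda>ds. if ypath Y0 ds = ys then f ds else 0) =
    measure_pmf.expectation (paths N s n Y0) (\<lambda>ds. if ypath Y0 ds = take (Suc n) ys then
      measure_pmf.expectation (draw_pmf N s (Yset Y0 ds))
        (\<lambda>d. if card (step (Yset Y0 ds) d) = ys ! Suc n then f (ds @ [d]) else 0)
    else 0)"
  (is "_ = measure_pmf.expectation _ ?g")
proof -
  let ?P = "paths N s n Y0"
  have "measure_pmf.expectation (paths N s (Suc n) Y0) (\<lambda>ds. if ypath Y0 ds = ys then f ds else 0) =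
      (\<Sum>ds\<in>set_pmf ?P. pmf ?P ds * measure_pmf.expectation (draw_pmf N s (Yset Y0 ds))
        (\<lambda>d. if ypath Y0 (ds @ [d]) = ys then f (ds @ [d]) else 0))"
    unfolding paths_Suc_snoc
    using finite_set_pmf_paths[OF assms(1,2)] finite_set_pmf_draw_pmf[OF assms(1,2)]
    by (subst pmf_expectation_bind[of "set_pmf ?P"]) auto
  also have "\<dots> = (\<Sum>ds\<in>set_pmf ?P. ?g ds * pmf ?P ds)"
    using ypath_snoc_eq_iff[OF length_paths assms(3)] by (intro sum.cong) auto
  also have "\<dots> = measure_pmf.expectation ?P ?g"
    using finite_set_pmf_paths[OF assms(1,2)] by (intro integral_measure_pmf_real[symmetric]) auto
  finally show ?thesis .
qed

lemma expectation_paths_Suc_factor: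
  fixes h k :: "draw list \<Rightarrow> real"
  assumes "N \<ge> 1" "s > 0" "length ys = Suc (Suc n)"
    and "\<And>ds. ds \<in> set_pmf (paths N s n Y0) \<Longrightarrow> ypath Y0 ds = take (Suc n) ys \<Longrightarrow>
      measure_pmf.expectation (draw_pmf N s (Yset Y0 ds))
        (\<lambda>d. if card (step (Yset Y0 ds) d) = ys ! Suc n then h (ds @ [d]) else 0) = P * k ds"
  shows "measure_pmf.expectation (paths N s (Suc n) Y0) (\<lambda>ds. if ypath Y0 ds = ys then h ds else 0) =
    P * measure_pmf.expectation (paths N s n Y0) (\<lambda>ds. if ypath Y0 ds = take (Suc n) ys then k ds else 0)"
proof -
  have "measure_pmf.expectation (paths N s (Suc n) Y0) (\<lambda>ds. if ypath Y0 ds = ys then h ds else 0) =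
      measure_pmf.expectation (paths N s n Y0) (\<lambda>ds. P * (if ypath Y0 ds = take (Suc n) ys then k ds else 0))"
    unfolding expectation_paths_Suc[OF assms(1-3)]
    using assms(4) by (intro integral_cong_AE) (auto simp: AE_measure_pmf_iff)
  then show ?thesis
    by simp
qed

lemma prob_eq_expectation:
  "measure_pmf.prob p B = measure_pmf.expectation p (\<lambda>x. if x \<in> B then 1 else 0)"
proof -
  have "(\<lambda>x. if x \<in> B then 1 else 0 :: real) = indicator B"
    by (auto simp: indicator_def)
  then show ?thesis
    by (simp add: measure_pmf.emeasure_eq_measure)
qed

lemma expectation_cond_paths_Suc:
  fixes f g :: "draw list \<Rightarrow> real"
  assumes "N \<ge> 1" "s > 0" "possible N s Y0 (Suc n) ys"
    and step: "\<And>ds. ds \<in> set_pmf (paths N s n Y0) \<Longrightarrow> ypath Y0 ds = take (Suc n) ys \<Longrightarrow>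
      measure_pmf.expectation (draw_pmf N s (Yset Y0 ds))
        (\<lambda>d. if card (step (Yset Y0 ds) d) = ys ! Suc n then f (ds @ [d]) else 0) = P * g ds"
    and prob: "\<And>ds. ds \<in> set_pmf (paths N s n Y0) \<Longrightarrow> ypath Y0 ds = take (Suc n) ys \<Longrightarrow>
      measure_pmf.expectation (draw_pmf N s (Yset Y0 ds))
        (\<lambda>d. if card (step (Yset Y0 ds) d) = ys ! Suc n then 1 else 0) = P"
  shows "measure_pmf.expectation (cond_pmf (paths N s (Suc n) Y0) {ds. ypath Y0 ds = ys}) f =
    measure_pmf.expectation (cond_pmf (paths N s n Y0) {ds. ypath Y0 ds = take (Suc n) ys}) g"
proof -
  let ?P = "paths N s n Y0" and ?P' = "paths N s (Suc n) Y0"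
  let ?A = "{ds. ypath Y0 ds = take (Suc n) ys}" and ?A' = "{ds. ypath Y0 ds = ys}"
  have len: "length ys = Suc (Suc n)"
    by (rule length_possible[OF assms(3)])
  have A': "set_pmf ?P' \<inter> ?A' \<noteq> {}"
    using assms(3) by (simp add: possible_def)
  have A: "set_pmf ?P \<inter> ?A \<noteq> {}"
    using assms(3) by (auto elim: possible_SucE)
  have fin: "finite (set_pmf ?P)" "finite (set_pmf ?P')"
    using assms(1,2) by (simp_all only: finite_set_pmf_paths)
  have prob': "measure_pmf.prob ?P' ?A' = P * measure_pmf.prob ?P ?A"
    unfolding prob_eq_expectation mem_Collect_eq using prob
    by (intro expectation_paths_Suc_factor[OF assms(1,2) len]) simp
  moreover have "measure_pmf.prob ?P' ?A' > 0"
    using A' by (metis disjoint_iff measure_pmf_posI)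
  ultimately have "P \<noteq> 0"
    by auto
  have "measure_pmf.expectation ?P' (\<lambda>ds. if ds \<in> ?A' then f ds else 0) =
      P * measure_pmf.expectation ?P (\<lambda>ds. if ds \<in> ?A then g ds else 0)"
    unfolding mem_Collect_eq using step by (intro expectation_paths_Suc_factor[OF assms(1,2) len]) simp
  then show ?thesis
    using \<open>P \<noteq> 0\<close>
    by (simp only: expectation_cond_pmf[OF fin(2) A'] expectation_cond_pmf[OF fin(1) A] prob') simp
qed

lemma expectation_lincomb:
  fixes f g :: "'a \<Rightarrow> real"
  assumes "finite (set_pmf p)"
  shows "measure_pmf.expectation p (\<lambda>x. a * f x + b * g x) =
    a * measure_pmf.expectation p f + b * measure_pmf.expectation p g"
proof -
  have "integrable p f" "integrable p g"
    using assms by (simp_all add: integrable_measure_pmf_finite)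
  then show ?thesis
    by simp
qed

lemma cond_lincomb_set_means:
  assumes "N \<ge> 1" "s > 0" "Y0 \<subseteq> {1..N}" "possible N s Y0 n ys"
  shows "measure_pmf.expectation (cond_pmf (paths N s n Y0) {ds. ypath Y0 ds = ys})
      (\<lambda>ds. a * set_mean (Yset Y0 ds) (descent_prob N Y0 ds)
        + b * set_mean ({1..N} - Yset Y0 ds) (descent_prob N Y0 ds))
    = a * Ucond N s Y0 n ys + b * Vcond N s Y0 n ys"
proof -
  let ?C = "cond_pmf (paths N s n Y0) {ds. ypath Y0 ds = ys}"
  have C: "set_pmf ?C = set_pmf (paths N s n Y0) \<inter> {ds. ypath Y0 ds = ys}"
    using assms(4) by (simp add: possible_def)
  have "finite (set_pmf ?C)"
    unfolding C using finite_set_pmf_paths[OF assms(1,2)] by blast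
  moreover have "measure_pmf.expectation ?C (XiB N Y0) =
      measure_pmf.expectation ?C (\<lambda>ds. set_mean ({1..N} - Yset Y0 ds) (descent_prob N Y0 ds))"
    using Yset_paths_subset[OF assms(1-3)]
    by (intro integral_cong_AE) (auto simp: AE_measure_pmf_iff XiB_eq_set_mean C)
  ultimately show ?thesis
    by (simp add: expectation_lincomb Ucond_def Vcond_def XiA_eq_set_mean[abs_def])
qed

lemma cond_expectation_step:
  assumes "N \<ge> 1" "s > 0" "Y0 \<subseteq> {1..N}" "possible N s Y0 (Suc n) ys" "ys ! n = k"
    and Xi_snoc: "\<And>ds d. Xi (ds @ [d]) = new_mean (Yset Y0 ds) (descent_prob N Y0 ds) d"
    and prob: "\<And>Y. Y \<subseteq> {1..N} \<Longrightarrow> card Y = k \<Longrightarrow>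
      measure_pmf.expectation (draw_pmf N s Y) (\<lambda>d. if card (step Y d) = ys ! Suc n then 1 else 0) = P"
    and mean: "\<And>Y F. Y \<subseteq> {1..N} \<Longrightarrow> card Y = k \<Longrightarrow>
      measure_pmf.expectation (draw_pmf N s Y)
        (\<lambda>d. if card (step Y d) = ys ! Suc n then new_mean Y F d else 0)
      = P * (\<alpha> * set_mean Y F + \<beta> * set_mean ({1..N} - Y) F)"
  shows "measure_pmf.expectation (cond_pmf (paths N s (Suc n) Y0) {ds. ypath Y0 ds = ys}) Xi =
    \<alpha> * Ucond N s Y0 n (take (Suc n) ys) + \<beta> * Vcond N s Y0 n (take (Suc n) ys)"
proof -
  have state: "Yset Y0 ds \<subseteq> {1..N}" "card (Yset Y0 ds) = k"
    if "ds \<in> set_pmf (paths N s n Y0)" "ypath Y0 ds = take (Suc n) ys" for ds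
    using that Yset_paths_subset[OF assms(1-3)] card_Yset_eq_nth length_possible[OF assms(4)] assms(5)
    by auto
  have "possible N s Y0 n (take (Suc n) ys)"
    using possible_SucE[OF assms(4)] unfolding possible_def by blast
  have "measure_pmf.expectation (cond_pmf (paths N s (Suc n) Y0) {ds. ypath Y0 ds = ys}) Xi =
      measure_pmf.expectation (cond_pmf (paths N s n Y0) {ds. ypath Y0 ds = take (Suc n) ys})
        (\<lambda>ds. \<alpha> * set_mean (Yset Y0 ds) (descent_prob N Y0 ds)
          + \<beta> * set_mean ({1..N} - Yset Y0 ds) (descent_prob N Y0 ds))"
  proof (rule expectation_cond_paths_Suc[OF assms(1,2,4)])
    fix ds assume "ds \<in> set_pmf (paths N s n Y0)" "ypath Y0 ds = take (Suc n) ys"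
    note Y = state[OF this]
    show "measure_pmf.expectation (draw_pmf N s (Yset Y0 ds))
        (\<lambda>d. if card (step (Yset Y0 ds) d) = ys ! Suc n then 1 else 0) = P"
      by (rule prob[OF Y])
    show "measure_pmf.expectation (draw_pmf N s (Yset Y0 ds))
        (\<lambda>d. if card (step (Yset Y0 ds) d) = ys ! Suc n then Xi (ds @ [d]) else 0) =
        P * (\<alpha> * set_mean (Yset Y0 ds) (descent_prob N Y0 ds)
          + \<beta> * set_mean ({1..N} - Yset Y0 ds) (descent_prob N Y0 ds))"
      unfolding Xi_snoc by (rule mean[OF Y])
  qed
  also have "\<dots> = \<alpha> * Ucond N s Y0 n (take (Suc n) ys) + \<beta> * Vcond N s Y0 n (take (Suc n) ys)"
    by (rule cond_lincomb_set_means[OF assms(1-3) \<open>possible N s Y0 n _\<close>])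
  finally show ?thesis .
qed

section \<open>The recursions for \<open>U\<close> and \<open>V\<close>\<close>

lemma cond_means_up:
  assumes "N \<ge> 1" "s > 0" "Y0 \<subseteq> {1..N}" "possible N s Y0 (Suc n) ys"
    and "ys ! n = k" "0 < k" "k < N" "ys ! Suc n = k + 1"
  defines "a \<equiv> real (N - k) / (2 * real N * real (k + 1))"
  shows "Ucond N s Y0 (Suc n) ys =
      (1 - a) * Ucond N s Y0 n (take (Suc n) ys) + a * Vcond N s Y0 n (take (Suc n) ys)"
    and "k + 1 < N \<Longrightarrow> Vcond N s Y0 (Suc n) ys = Vcond N s Y0 n (take (Suc n) ys)"
proof -
  define P where "P = (1 + s) * real k * real (N - k) / (real N * (real k + (1 + s) * real (N - k)))"
  have up: "measure_pmf.expectation (draw_pmf N s Y) (\<lambda>d. if card (step Y d) = ys ! Suc n then h d else 0)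
      = P * class_mean N Y ({1..N} - Y) h" if "Y \<subseteq> {1..N}" "card Y = k" for Y h
    using expectation_draw_up[OF assms(1,2) that(1), of h] that assms(8) by (simp add: P_def)
  have prob: "measure_pmf.expectation (draw_pmf N s Y) (\<lambda>d. if card (step Y d) = ys ! Suc n then 1 else 0)
      = P" if "Y \<subseteq> {1..N}" "card Y = k" for Y
  proof -
    have "class_mean N Y ({1..N} - Y) (\<lambda>_. 1) = 1"
      using that assms(1,6,7) card_interval_diff[OF that(1)]
      by (intro class_mean_const) (auto intro: finite_subset)
    then show ?thesis
      using up[OF that, of "\<lambda>_. 1"] by simp
  qed
  show "Ucond N s Y0 (Suc n) ys =
      (1 - a) * Ucond N s Y0 n (take (Suc n) ys) + a * Vcond N s Y0 n (take (Suc n) ys)"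
    unfolding Ucond_def[of N s Y0 "Suc n"]
    by (rule cond_expectation_step[where new_mean = "new_adv_mean N", OF assms(1-5) XiA_snoc prob])
       (simp_all only: up class_mean_new_adv_AB assms(6,7) a_def)
  assume "k + 1 < N"
  have "Vcond N s Y0 (Suc n) ys = 0 * Ucond N s Y0 n (take (Suc n) ys) + 1 * Vcond N s Y0 n (take (Suc n) ys)"
    unfolding Vcond_def[of N s Y0 "Suc n"]
    by (rule cond_expectation_step[where new_mean = "new_dis_mean N", OF assms(1-5) XiB_snoc prob])
       (simp_all only: up class_mean_new_dis_AB assms(6,7) \<open>k + 1 < N\<close>, simp)
  then show "Vcond N s Y0 (Suc n) ys = Vcond N s Y0 n (take (Suc n) ys)"
    by simp
qed

lemma cond_means_down:
  assumes "N \<ge> 1" "s > 0" "Y0 \<subseteq> {1..N}" "possible N s Y0 (Suc n) ys"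
    and "ys ! n = k" "0 < k" "k < N" "ys ! Suc n = k - 1"
  defines "b \<equiv> real k / (2 * real N * real (N - k + 1))"
  shows "Vcond N s Y0 (Suc n) ys =
      b * Ucond N s Y0 n (take (Suc n) ys) + (1 - b) * Vcond N s Y0 n (take (Suc n) ys)"
    and "1 < k \<Longrightarrow> Ucond N s Y0 (Suc n) ys = Ucond N s Y0 n (take (Suc n) ys)"
proof -
  define P where "P = real k * real (N - k) / (real N * (real k + (1 + s) * real (N - k)))"
  have down: "measure_pmf.expectation (draw_pmf N s Y) (\<lambda>d. if card (step Y d) = ys ! Suc n then h d else 0)
      = P * class_mean N ({1..N} - Y) Y h" if "Y \<subseteq> {1..N}" "card Y = k" for Y h
  proof -
    have "Y \<noteq> {}"
      using that(2) assms(6) by auto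
    then show ?thesis
      using expectation_draw_down[OF assms(1,2) that(1), of h] that assms(8) by (simp add: P_def)
  qed
  have prob: "measure_pmf.expectation (draw_pmf N s Y) (\<lambda>d. if card (step Y d) = ys ! Suc n then 1 else 0)
      = P" if "Y \<subseteq> {1..N}" "card Y = k" for Y
  proof -
    have "class_mean N ({1..N} - Y) Y (\<lambda>_. 1) = 1"
      using that assms(1,6,7) card_interval_diff[OF that(1)]
      by (intro class_mean_const) (auto intro: finite_subset)
    then show ?thesis
      using down[OF that, of "\<lambda>_. 1"] by simp
  qed
  show "Vcond N s Y0 (Suc n) ys =
      b * Ucond N s Y0 n (take (Suc n) ys) + (1 - b) * Vcond N s Y0 n (take (Suc n) ys)"
    unfolding Vcond_def[of N s Y0 "Suc n"]
    by (rule cond_expectation_step[where new_mean = "new_dis_mean N", OF assms(1-5) XiB_snoc prob])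
       (simp_all only: down class_mean_new_dis_BA assms(6,7) b_def)
  assume "1 < k"
  have "Ucond N s Y0 (Suc n) ys = 1 * Ucond N s Y0 n (take (Suc n) ys) + 0 * Vcond N s Y0 n (take (Suc n) ys)"
    unfolding Ucond_def[of N s Y0 "Suc n"]
    by (rule cond_expectation_step[where new_mean = "new_adv_mean N", OF assms(1-5) XiA_snoc prob])
       (simp_all only: down class_mean_new_adv_BA assms(6,7) \<open>1 < k\<close>, simp)
  then show "Ucond N s Y0 (Suc n) ys = Ucond N s Y0 n (take (Suc n) ys)"
    by simp
qed

lemma cond_means_stay:
  assumes "N \<ge> 1" "s > 0" "Y0 \<subseteq> {1..N}" "possible N s Y0 (Suc n) ys"
    and "ys ! n = k" "0 < k" "k < N" "ys ! Suc n = k"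
  defines "p \<equiv> real k ^ 2 / (real k ^ 2 + (1 + s) * real (N - k) ^ 2)"
    and "q \<equiv> (1 + s) * real (N - k) ^ 2 / (real k ^ 2 + (1 + s) * real (N - k) ^ 2)"
    and "c \<equiv> real (N - k) / (2 * real k * real N)"
    and "d \<equiv> real k / (2 * real N * real (N - k))"
  defines "U \<equiv> Ucond N s Y0 n (take (Suc n) ys)" and "V \<equiv> Vcond N s Y0 n (take (Suc n) ys)"
  shows "Ucond N s Y0 (Suc n) ys = p * ((1 - c) * U + c * V) + q * U"
    and "Vcond N s Y0 (Suc n) ys = p * V + q * (d * U + (1 - d) * V)"
proof -
  define P where "P = (real k ^ 2 + (1 + s) * real (N - k) ^ 2) / (real N * (real k + (1 + s) * real (N - k)))"
  have stay: "measure_pmf.expectation (draw_pmf N s Y) (\<lambda>d. if card (step Y d) = ys ! Suc n then h d else 0)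
      = P * (p * class_mean N Y Y h + q * class_mean N ({1..N} - Y) ({1..N} - Y) h)"
    if "Y \<subseteq> {1..N}" "card Y = k" for Y h
    using expectation_draw_stay[OF assms(1,2) that(1), of h] that assms(8) by (simp add: P_def p_def q_def)
  have "real k ^ 2 + (1 + s) * real (N - k) ^ 2 > 0"
    using assms(2,6) by (simp add: add_pos_nonneg)
  then have "p + q = 1"
    unfolding p_def q_def by (simp add: add_divide_distrib[symmetric])
  have prob: "measure_pmf.expectation (draw_pmf N s Y) (\<lambda>d. if card (step Y d) = ys ! Suc n then 1 else 0)
      = P" if "Y \<subseteq> {1..N}" "card Y = k" for Y
  proof -
    have "class_mean N Y Y (\<lambda>_. 1) = 1" "class_mean N ({1..N} - Y) ({1..N} - Y) (\<lambda>_. 1) = 1"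
      using that assms(1,6,7) card_interval_diff[OF that(1)]
      by (auto intro!: class_mean_const intro: finite_subset)
    then show ?thesis
      using stay[OF that, of "\<lambda>_. 1"] \<open>p + q = 1\<close> by simp
  qed
  have "Ucond N s Y0 (Suc n) ys = (p * (1 - c) + q) * U + p * c * V"
    unfolding Ucond_def[of N s Y0 "Suc n"] U_def V_def
    by (rule cond_expectation_step[where new_mean = "new_adv_mean N", OF assms(1-5) XiA_snoc prob])
       (simp_all only: stay class_mean_new_adv_AA class_mean_new_adv_BB assms(6,7) c_def,
        simp add: algebra_simps)
  then show "Ucond N s Y0 (Suc n) ys = p * ((1 - c) * U + c * V) + q * U"
    by (simp add: algebra_simps)
  have "Vcond N s Y0 (Suc n) ys = q * d * U + (p + q * (1 - d)) * V"
    unfolding Vcond_def[of N s Y0 "Suc n"] U_def V_def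
    by (rule cond_expectation_step[where new_mean = "new_dis_mean N", OF assms(1-5) XiB_snoc prob])
       (simp_all only: stay class_mean_new_dis_AA class_mean_new_dis_BB assms(6,7) d_def,
        simp add: algebra_simps)
  then show "Vcond N s Y0 (Suc n) ys = p * V + q * (d * U + (1 - d) * V)"
    by (simp add: algebra_simps)
qed

lemma possible_Suc_nth_adjacent:
  assumes "N \<ge> 1" "s > 0" "Y0 \<subseteq> {1..N}" "possible N s Y0 (Suc n) ys"
  shows "ys ! Suc n \<le> ys ! n + 1" "ys ! n \<le> ys ! Suc n + 1"
proof -
  obtain ds d where ds: "ds \<in> set_pmf (paths N s n Y0)" "ypath Y0 ds = take (Suc n) ys"
      "card (step (Yset Y0 ds) d) = ys ! Suc n"
    using possible_SucE[OF assms(4)] by blast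
  have "finite (Yset Y0 ds)"
    using Yset_paths_subset[OF assms(1-3) ds(1)] finite_subset by blast
  moreover have "card (Yset Y0 ds) = ys ! n"
    using card_Yset_eq_nth[OF ds(1,2) length_possible[OF assms(4)]] .
  moreover obtain mu pa ka where "d = (mu, pa, ka)"
    by (cases d)
  ultimately show "ys ! Suc n \<le> ys ! n + 1" "ys ! n \<le> ys ! Suc n + 1"
    using ds(3) card_step[of "Yset Y0 ds" mu pa ka] by (auto split: if_splits)
qed

lemma cond_mean_absorption_0:
  assumes "N \<ge> 2" "s > 0" "Y0 \<subseteq> {1..N}" "possible N s Y0 (Suc n) ys"
    and "ys ! Suc n = 0" "0 < ys ! n"
  shows "Vcond N s Y0 (Suc n) ys =
    1 / (2 * real N ^ 2) * Ucond N s Y0 n (take (Suc n) ys)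
    + (2 * real N ^ 2 - 1) / (2 * real N ^ 2) * Vcond N s Y0 n (take (Suc n) ys)"
proof -
  have "ys ! n = 1"
  proof -
    have "ys ! n \<le> 1"
      using possible_Suc_nth_adjacent(2)[OF _ assms(2-4)] assms(1,5) by simp
    then show ?thesis
      using assms(6) by simp
  qed
  moreover have "1 \<le> N" "1 < N" "ys ! Suc n = 1 - 1"
    using assms(1,5) by auto
  ultimately have "Vcond N s Y0 (Suc n) ys =
      real 1 / (2 * real N * real (N - 1 + 1)) * Ucond N s Y0 n (take (Suc n) ys)
      + (1 - real 1 / (2 * real N * real (N - 1 + 1))) * Vcond N s Y0 n (take (Suc n) ys)"
    by (intro cond_means_down(1)[OF _ assms(2-4)]) auto
  then have "Vcond N s Y0 (Suc n) ys =
      1 / (2 * real N * real N) * Ucond N s Y0 n (take (Suc n) ys)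
      + (1 - 1 / (2 * real N * real N)) * Vcond N s Y0 n (take (Suc n) ys)"
    using \<open>1 \<le> N\<close> by simp
  moreover have "1 - 1 / (2 * real N * real N) = (2 * real N ^ 2 - 1) / (2 * real N ^ 2)"
    using assms(1) by (simp add: field_simps power2_eq_square)
  ultimately show ?thesis
    by (simp add: power2_eq_square)
qed

lemma cond_mean_absorption_N:
  assumes "N \<ge> 2" "s > 0" "Y0 \<subseteq> {1..N}" "possible N s Y0 (Suc n) ys"
    and "ys ! Suc n = N" "ys ! n < N"
  shows "Ucond N s Y0 (Suc n) ys =
    (2 * real N ^ 2 - 1) / (2 * real N ^ 2) * Ucond N s Y0 n (take (Suc n) ys)
    + 1 / (2 * real N ^ 2) * Vcond N s Y0 n (take (Suc n) ys)"
proof -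
  have "ys ! n = N - 1"
  proof -
    have "N \<le> ys ! n + 1"
      using possible_Suc_nth_adjacent(1)[OF _ assms(2-4)] assms(1,5) by simp
    then show ?thesis
      using assms(6) by simp
  qed
  moreover have "1 \<le> N" "0 < N - 1" "N - 1 < N" "ys ! Suc n = N - 1 + 1"
    using assms(1,5) by auto
  ultimately have "Ucond N s Y0 (Suc n) ys =
      (1 - real (N - (N - 1)) / (2 * real N * real (N - 1 + 1))) * Ucond N s Y0 n (take (Suc n) ys)
      + real (N - (N - 1)) / (2 * real N * real (N - 1 + 1)) * Vcond N s Y0 n (take (Suc n) ys)"
    by (intro cond_means_up(1)[OF _ assms(2-4)]) auto
  then have "Ucond N s Y0 (Suc n) ys =
      (1 - 1 / (2 * real N * real N)) * Ucond N s Y0 n (take (Suc n) ys)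
      + 1 / (2 * real N * real N) * Vcond N s Y0 n (take (Suc n) ys)"
    using \<open>1 \<le> N\<close> by simp
  moreover have "1 - 1 / (2 * real N * real N) = (2 * real N ^ 2 - 1) / (2 * real N ^ 2)"
    using assms(1) by (simp add: field_simps power2_eq_square)
  ultimately show ?thesis
    by (simp add: power2_eq_square)
qed

theorem proposition3:
  fixes N :: nat and s :: real and Y0 :: "nat set"
  assumes hN: "N \<ge> 2" and hs: "s > 0" and hY0: "Y0 \<subseteq> {1..N}"
  shows
   "(\<forall>n k ys. possible N s Y0 (Suc n) ys \<and> ys ! n = k \<and> 1 \<le> k \<and> k \<le> N - 1 \<longrightarrow>
      (let U = Ucond N s Y0 n (take (Suc n) ys); V = Vcond N s Y0 n (take (Suc n) ys);
           U' = Ucond N s Y0 (Suc n) ys; V' = Vcond N s Y0 (Suc n) ys in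
       (ys ! Suc n = k + 1 \<longrightarrow>
          (let a = real (N - k) / (2 * real N * real (k + 1)) in
             U' = (1 - a) * U + a * V \<and> (k + 1 < N \<longrightarrow> V' = V)))
     \<and> (ys ! Suc n = k - 1 \<longrightarrow>
          (let b = real k / (2 * real N * real (N - k + 1)) in
             (1 < k \<longrightarrow> U' = U) \<and> V' = b * U + (1 - b) * V))
     \<and> (ys ! Suc n = k \<longrightarrow>
          (let p = real k ^ 2 / (real k ^ 2 + (1 + s) * real (N - k) ^ 2);
               q = (1 + s) * real (N - k) ^ 2 / (real k ^ 2 + (1 + s) * real (N - k) ^ 2);
               c = real (N - k) / (2 * real k * real N);
               d = real k / (2 * real N * real (N - k)) in
             U' = p * ((1 - c) * U + c * V) + q * U
           \<and> V' = p * V + q * (d * U + (1 - d) * V)))))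
  \<and> (\<forall>n ys. possible N s Y0 (Suc n) ys \<and> ys ! Suc n = 0 \<and>
        (\<forall>j\<le>n. 0 < ys ! j \<and> ys ! j < N) \<longrightarrow>
      Vcond N s Y0 (Suc n) ys =
        1 / (2 * real N ^ 2) * Ucond N s Y0 n (take (Suc n) ys)
        + (2 * real N ^ 2 - 1) / (2 * real N ^ 2) * Vcond N s Y0 n (take (Suc n) ys))
  \<and> (\<forall>n ys. possible N s Y0 (Suc n) ys \<and> ys ! Suc n = N \<and>
        (\<forall>j\<le>n. 0 < ys ! j \<and> ys ! j < N) \<longrightarrow>
      Ucond N s Y0 (Suc n) ys =
        (2 * real N ^ 2 - 1) / (2 * real N ^ 2) * Ucond N s Y0 n (take (Suc n) ys)
        + 1 / (2 * real N ^ 2) * Vcond N s Y0 n (take (Suc n) ys))"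
proof (intro conjI allI impI, goal_cases)
  case (1 n k ys)
  have N1: "N \<ge> 1"
    using hN by simp
  from 1 have H: "possible N s Y0 (Suc n) ys" "ys ! n = k" "0 < k" "k < N"
    using hN by auto
  show ?case
    unfolding Let_def
    by (simp add: cond_means_up[OF N1 hs hY0 H] cond_means_down[OF N1 hs hY0 H]
        cond_means_stay[OF N1 hs hY0 H])
next
  case (2 n ys)
  then show ?case
    by (intro cond_mean_absorption_0[OF hN hs hY0]) auto
next
  case (3 n ys)
  then show ?case
    by (intro cond_mean_absorption_N[OF hN hs hY0]) auto
qed

end
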